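(* Let $X$ be a compact Hausdorff space and $G$ a second-countable compact group acting continuously on $X$, and let $\alpha\colon G\to\mathrm{Aut}(C(X))$, $\alpha_g(f)(x)=f(g^{-1}\cdot x)$, be the induced action. Assume that $(G,C(G),\mathtt{Lt})$ is weakly equivariantly semiprojective with respect to the class of commutative C*-algebras. Then $\alpha$ has the Rokhlin property if and only if there is a homeomorphism $\sigma\colon X/G\times G\to X$ with $g\cdot\sigma(Gx,h)=\sigma(Gx,gh)$ for all $g,h\in G$ and $x\in X$.
   Context: $\mathtt{Lt}_g(f)(h)=f(g^{-1}h)$. For a C*-algebra $C$ with continuous $G$-action: $C_\infty=\ell^\infty(\mathbb N,C)/c_0(\mathbb N,C)$ with quotient map $\kappa_C$, with coordinatewise induced actions. $(G,C(G),\mathtt{Lt})$ is weakly equivariantly semiprojective with respect to commutative C*-algebras if for every commutative C*-algebra $C$ with continuous $G$-action and every equivariant homomorphism $\varphi\colon C(G)\to C_\infty$ there is an equivariant homomorphism $\psi\colon C(G)\to\ell^\infty(\mathbb N,C)$ with $\kappa_C\circ\psi=\varphi$. Rokhlin property for an action $\alpha$ on a unital $A$: with $A$ embedded in $A_\infty$ as constant sequences, $\alpha^\infty$ coordinatewise on $\ell^\infty(\mathbb N,A)$, $\ell^\infty_\alpha(\mathbb N,A)$ the sequences $a$ with $g\mapsto\alpha^\infty_g(a)$ norm continuous, $A_{\infty,\alpha}=\kappa_A(\ell^\infty_\alpha(\mathbb N,A))$ with action $\alpha_\infty$: there is a unital homomorphism $\varphi\colon C(G)\to A_{\infty,\alpha}\cap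 A'$ with $\varphi\circ\mathtt{Lt}_g=(\alpha_\infty)_g\circ\varphi$ for all $g$. *)

theory Defs
  imports "HOL-Analysis.Analysis"
begin

definition bdd_fun :: "('c \<Rightarrow> complex) \<Rightarrow> bool" where
  "bdd_fun f \<longleftrightarrow> bdd_above (range (\<lambda>x. cmod (f x)))"

definition supnorm :: "('c \<Rightarrow> complex) \<Rightarrow> real" where
  "supnorm f = (SUP x. cmod (f x))"

definition comm_cstar_alg :: "('c \<Rightarrow> complex) set \<Rightarrow> bool" where
  "comm_cstar_alg C \<longleftrightarrow>
     (\<forall>f\<in>C. bdd_fun f) \<and> (\<lambda>x. 0) \<in> C \<and>
     (\<forall>f\<in>C. \<forall>h\<in>C. (\<lambda>x. f x + h x) \<in> C \<and> (\<lambda>x. f x * h x) \<in> C) \<and>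
     (\<forall>c. \<forall>f\<in>C. (\<lambda>x. c * f x) \<in> C) \<and>
     (\<forall>f\<in>C. (\<lambda>x. cnj (f x)) \<in> C) \<and>
     (\<forall>f. bdd_fun f \<and> (\<forall>e>0. \<exists>h\<in>C. supnorm (\<lambda>x. f x - h x) < e) \<longrightarrow> f \<in> C)"

definition cont_action_on ::
  "('g::{group_add,topological_space} \<Rightarrow> ('c \<Rightarrow> complex) \<Rightarrow> ('c \<Rightarrow> complex)) \<Rightarrow> ('c \<Rightarrow> complex) set \<Rightarrow> bool" where
  "cont_action_on \<gamma> C \<longleftrightarrow>
     (\<forall>g. \<forall>f\<in>C. \<gamma> g f \<in> C) \<and>
     (\<forall>g. \<forall>f\<in>C. \<forall>h\<in>C. \<gamma> g (\<lambda>x. f x + h x) = (\<lambda>x. \<gamma> g f x + \<gamma> g h x) \<and>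
                        \<gamma> g (\<lambda>x. f x * h x) = (\<lambda>x. \<gamma> g f x * \<gamma> g h x)) \<and>
     (\<forall>g c. \<forall>f\<in>C. \<gamma> g (\<lambda>x. c * f x) = (\<lambda>x. c * \<gamma> g f x)) \<and>
     (\<forall>g. \<forall>f\<in>C. \<gamma> g (\<lambda>x. cnj (f x)) = (\<lambda>x. cnj (\<gamma> g f x))) \<and>
     (\<forall>f\<in>C. \<gamma> 0 f = f) \<and>
     (\<forall>g h. \<forall>f\<in>C. \<gamma> (g + h) f = \<gamma> g (\<gamma> h f)) \<and>
     (\<forall>f\<in>C. \<forall>g0. \<forall>e>0. \<exists>U. open U \<and> g0 \<in> U \<and>
        (\<forall>g\<in>U. supnorm (\<lambda>x. \<gamma> g f x - \<gamma> g0 f x) < e))"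

section \<open>Sequence algebras; C_infty is handled via representatives modulo c_0\<close>

definition linf :: "('c \<Rightarrow> complex) set \<Rightarrow> (nat \<Rightarrow> 'c \<Rightarrow> complex) set" where
  "linf C = {a. (\<forall>n. a n \<in> C) \<and> bdd_above (range (\<lambda>n. supnorm (a n)))}"

definition seqnorm :: "(nat \<Rightarrow> 'c \<Rightarrow> complex) \<Rightarrow> real" where
  "seqnorm a = (SUP n. supnorm (a n))"

definition null_seq :: "(nat \<Rightarrow> 'c \<Rightarrow> complex) \<Rightarrow> bool" where
  "null_seq a \<longleftrightarrow> (\<lambda>n. supnorm (a n)) \<longlonglongrightarrow> 0"

definition asymp_eq :: "(nat \<Rightarrow> 'c \<Rightarrow> complex) \<Rightarrow> (nat \<Rightarrow> 'c \<Rightarrow> complex) \<Rightarrow> bool" where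
  "asymp_eq a b \<longleftrightarrow> null_seq (\<lambda>n x. a n x - b n x)"

definition CG :: "('g::topological_space \<Rightarrow> complex) set" where
  "CG = {f. continuous_on UNIV f}"

definition Lt :: "'g::group_add \<Rightarrow> ('g \<Rightarrow> complex) \<Rightarrow> ('g \<Rightarrow> complex)" where
  "Lt g f = (\<lambda>h. f (- g + h))"

text \<open>kappa o Phi is a *-homomorphism from D into C_infty\<close>
definition hom_mod :: "('g \<Rightarrow> complex) set \<Rightarrow> (('g \<Rightarrow> complex) \<Rightarrow> nat \<Rightarrow> 'c \<Rightarrow> complex) \<Rightarrow> bool" where
  "hom_mod D \<Phi> \<longleftrightarrow>
     (\<forall>f\<in>D. \<forall>h\<in>D. asymp_eq (\<Phi> (\<lambda>y. f y + h y)) (\<lambda>n x. \<Phi> f n x + \<Phi> h n x) \<and>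
                    asymp_eq (\<Phi> (\<lambda>y. f y * h y)) (\<lambda>n x. \<Phi> f n x * \<Phi> h n x)) \<and>
     (\<forall>c. \<forall>f\<in>D. asymp_eq (\<Phi> (\<lambda>y. c * f y)) (\<lambda>n x. c * \<Phi> f n x)) \<and>
     (\<forall>f\<in>D. asymp_eq (\<Phi> (\<lambda>y. cnj (f y))) (\<lambda>n x. cnj (\<Phi> f n x)))"

definition star_hom :: "('g \<Rightarrow> complex) set \<Rightarrow> (('g \<Rightarrow> complex) \<Rightarrow> nat \<Rightarrow> 'c \<Rightarrow> complex) \<Rightarrow> bool" where
  "star_hom D \<Psi> \<longleftrightarrow>
     (\<forall>f\<in>D. \<forall>h\<in>D. \<Psi> (\<lambda>y. f y + h y) = (\<lambda>n x. \<Psi> f n x + \<Psi> h n x) \<and>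
                    \<Psi> (\<lambda>y. f y * h y) = (\<lambda>n x. \<Psi> f n x * \<Psi> h n x)) \<and>
     (\<forall>c. \<forall>f\<in>D. \<Psi> (\<lambda>y. c * f y) = (\<lambda>n x. c * \<Psi> f n x)) \<and>
     (\<forall>f\<in>D. \<Psi> (\<lambda>y. cnj (f y)) = (\<lambda>n x. cnj (\<Psi> f n x)))"

section \<open>Weak equivariant semiprojectivity w.r.t. commutative C*-algebras
  (realised as function algebras on the type 'c)\<close>

definition wesp_comm_Lt :: "'g::{group_add,topological_space} itself \<Rightarrow> 'c itself \<Rightarrow> bool" where
  "wesp_comm_Lt _ _ \<longleftrightarrow>
    (\<forall>(C::('c \<Rightarrow> complex) set) (\<gamma>::'g \<Rightarrow> ('c \<Rightarrow> complex) \<Rightarrow> ('c \<Rightarrow> complex)).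
      comm_cstar_alg C \<and> cont_action_on \<gamma> C \<longrightarrow>
      (\<forall>\<Phi>::('g \<Rightarrow> complex) \<Rightarrow> nat \<Rightarrow> 'c \<Rightarrow> complex.
         (\<forall>f\<in>CG. \<Phi> f \<in> linf C) \<and> hom_mod CG \<Phi> \<and>
         (\<forall>g. \<forall>f\<in>CG. asymp_eq (\<Phi> (Lt g f)) (\<lambda>n. \<gamma> g (\<Phi> f n)))
       \<longrightarrow> (\<exists>\<Psi>::('g \<Rightarrow> complex) \<Rightarrow> nat \<Rightarrow> 'c \<Rightarrow> complex.
              (\<forall>f\<in>CG. \<Psi> f \<in> linf C) \<and> star_hom CG \<Psi> \<and>
              (\<forall>g. \<forall>f\<in>CG. \<Psi> (Lt g f) = (\<lambda>n. \<gamma> g (\<Psi> f n))) \<and>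
              (\<forall>f\<in>CG. asymp_eq (\<Psi> f) (\<Phi> f)))))"

definition topological_group :: "'g::{group_add,topological_space} itself \<Rightarrow> bool" where
  "topological_group _ \<longleftrightarrow>
     continuous_on UNIV (\<lambda>p::'g \<times> 'g. fst p + snd p) \<and> continuous_on UNIV (\<lambda>g::'g. - g)"

definition continuous_group_action :: "('g::{group_add,topological_space} \<Rightarrow> 'x::topological_space \<Rightarrow> 'x) \<Rightarrow> bool" where
  "continuous_group_action act \<longleftrightarrow>
     continuous_on UNIV (\<lambda>p::'g \<times> 'x. act (fst p) (snd p)) \<and>
     (\<forall>x. act 0 x = x) \<and> (\<forall>g h x. act (g + h) x = act g (act h x))"

definition CX :: "('x::topological_space \<Rightarrow> complex) set" where
  "CX = {f. continuous_on UNIV f}"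

definition induced_action :: "('g::group_add \<Rightarrow> 'x \<Rightarrow> 'x) \<Rightarrow> 'g \<Rightarrow> ('x \<Rightarrow> complex) \<Rightarrow> ('x \<Rightarrow> complex)" where
  "induced_action act g f = (\<lambda>x. f (act (- g) x))"

definition linf_alpha :: "('g::{group_add,topological_space} \<Rightarrow> 'x \<Rightarrow> 'x) \<Rightarrow> ('x \<Rightarrow> complex) set \<Rightarrow> (nat \<Rightarrow> 'x \<Rightarrow> complex) set" where
  "linf_alpha act A = {a \<in> linf A. \<forall>g0. \<forall>e>0. \<exists>U. open U \<and> g0 \<in> U \<and>
      (\<forall>g\<in>U. seqnorm (\<lambda>n x. induced_action act g (a n) x - induced_action act g0 (a n) x) < e)}"

definition rokhlin :: "('g::{group_add,topological_space} \<Rightarrow> 'x::topological_space \<Rightarrow> 'x) \<Rightarrow> bool" where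
  "rokhlin act \<longleftrightarrow>
    (\<exists>\<Phi>::('g \<Rightarrow> complex) \<Rightarrow> nat \<Rightarrow> 'x \<Rightarrow> complex.
       (\<forall>f\<in>CG. \<Phi> f \<in> linf_alpha act CX) \<and> hom_mod CG \<Phi> \<and>
       asymp_eq (\<Phi> (\<lambda>_. 1)) (\<lambda>n x. 1) \<and>
       (\<forall>f\<in>CG. \<forall>b\<in>CX. null_seq (\<lambda>n x. \<Phi> f n x * b x - b x * \<Phi> f n x)) \<and>
       (\<forall>g. \<forall>f\<in>CG. asymp_eq (\<Phi> (Lt g f)) (\<lambda>n. induced_action act g (\<Phi> f n))))"

definition orbit :: "('g \<Rightarrow> 'x \<Rightarrow> 'x) \<Rightarrow> 'x \<Rightarrow> 'x set" where
  "orbit act x = range (\<lambda>g. act g x)"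

definition orbits :: "('g \<Rightarrow> 'x \<Rightarrow> 'x) \<Rightarrow> 'x set set" where
  "orbits act = range (orbit act)"

definition orbit_space_topology :: "('g \<Rightarrow> 'x::topological_space \<Rightarrow> 'x) \<Rightarrow> 'x set topology" where
  "orbit_space_topology act = topology (\<lambda>U. U \<subseteq> orbits act \<and> open (\<Union>U))"

end

theory Submission
  imports Defs
begin

text \<open>
  A trivialization \<open>\<sigma>\<close> of \<open>X\<close> amounts to a continuous map \<open>\<phi> : X \<rightarrow> G\<close> with
  \<open>\<phi>(g\<cdot>x) = g\<phi>(x)\<close>: given \<open>\<phi>\<close>, put \<open>\<sigma>(Gx, h) = h\<phi>(x)\<^sup>-\<^sup>1\<cdot>x\<close>, and conversely
  take the second coordinate of \<open>\<sigma>\<^sup>-\<^sup>1\<close>. Composition with such a \<open>\<phi>\<close> is an equivariant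
  unital homomorphism \<open>C(G) \<rightarrow> C(X)\<close>, which is trivially a Rokhlin map.
  Conversely, weak equivariant semiprojectivity lifts a Rokhlin map to an exactly
  equivariant homomorphism into \<open>l\<^sup>\<infinity>(\<nat>, C(X))\<close>. Its value on \<open>1\<close> is a sequence of
  projections converging to \<open>1\<close>, so one coordinate is an equivariant unital homomorphism
  \<open>C(G) \<rightarrow> C(X)\<close>. Evaluated at a point \<open>x\<close> it is a character of \<open>C(G)\<close>, i.e. evaluation
  at some \<open>\<phi>(x) \<in> G\<close>, and \<open>\<phi>\<close> is the required equivariant map.
\<close>

section \<open>The C*-algebra \<open>C(X)\<close> of a compact space and the induced action\<close>

lemma norm_le_supnorm: "bdd_fun f \<Longrightarrow> cmod (f x) \<le> supnorm f"
  unfolding bdd_fun_def supnorm_def by (rule cSUP_upper) auto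

lemma supnorm_le: "(\<And>x. cmod (f x) \<le> B) \<Longrightarrow> supnorm f \<le> B"
  unfolding supnorm_def by (rule cSUP_least) auto

lemma asymp_eq_refl: "asymp_eq a a"
  by (simp add: asymp_eq_def null_seq_def supnorm_def)

lemma bdd_fun_CX:
  assumes "compact (UNIV :: 'x::topological_space set)" and "f \<in> (CX :: ('x \<Rightarrow> complex) set)"
  shows "bdd_fun f"
proof -
  have "bounded (range f)"
    using assms by (intro compact_imp_bounded compact_continuous_image) (simp_all add: CX_def)
  then show ?thesis
    unfolding bdd_fun_def bdd_above_def bounded_iff by auto
qed

lemma bdd_fun_diff:
  assumes "bdd_fun f" and "bdd_fun h"
  shows "bdd_fun (\<lambda>x. f x - h x)"
proof -
  obtain A B where "\<And>x. cmod (f x) \<le> A" "\<And>x. cmod (h x) \<le> B"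
    using assms unfolding bdd_fun_def bdd_above_def by auto
  then have "cmod (f x - h x) \<le> A + B" for x
    by (meson add_mono norm_triangle_ineq4 order_trans)
  then show ?thesis
    unfolding bdd_fun_def bdd_above_def by auto
qed

lemma null_seq_CX_eventually_small:
  assumes "compact (UNIV :: 'x::topological_space set)"
    and "\<And>n. a n \<in> (CX :: ('x \<Rightarrow> complex) set)" and "null_seq a" and "e > 0"
  shows "\<forall>\<^sub>F n in sequentially. \<forall>x. cmod (a n x) < e"
  using order_tendstoD(2)[OF assms(3)[unfolded null_seq_def] assms(4)]
proof (rule eventually_mono)
  fix n assume "supnorm (a n) < e"
  then show "\<forall>x. cmod (a n x) < e"
    using norm_le_supnorm[OF bdd_fun_CX[OF assms(1,2)]] by (meson le_less_trans)
qed

lemma CX_closed_under_uniform_approximation: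
  fixes f :: "'x::topological_space \<Rightarrow> complex"
  assumes "compact (UNIV :: 'x set)" and "bdd_fun f"
    and "\<forall>e>0. \<exists>h\<in>CX. supnorm (\<lambda>x. f x - h x) < e"
  shows "f \<in> CX"
proof -
  have "\<forall>n. \<exists>h\<in>CX. supnorm (\<lambda>x. f x - h x) < 1 / Suc n"
    using assms(3) by simp
  then obtain h where h: "\<And>n. h n \<in> CX" "\<And>n. supnorm (\<lambda>x. f x - h n x) < 1 / Suc n"
    by metis
  have lim: "uniform_limit UNIV h f sequentially"
    unfolding uniform_limit_iff
  proof (intro allI impI)
    fix e :: real assume "e > 0"
    then obtain N where N: "1 / Suc N < e"
      using nat_approx_posE by blast
    have "dist (h n x) (f x) < e" if "n \<ge> N" for n x
    proof -
      have "dist (h n x) (f x) \<le> supnorm (\<lambda>x. f x - h n x)"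
        using norm_le_supnorm[OF bdd_fun_diff[OF assms(2) bdd_fun_CX[OF assms(1) h(1)]]]
        by (simp add: dist_norm norm_minus_commute)
      also have "\<dots> < 1 / Suc n" by (fact h(2))
      also have "\<dots> \<le> 1 / Suc N" using that by (simp add: frac_le)
      finally show ?thesis using N by linarith
    qed
    then show "\<forall>\<^sub>F n in sequentially. \<forall>x\<in>UNIV. dist (h n x) (f x) < e"
      using eventually_sequentially by blast
  qed
  then show "f \<in> CX"
    using h(1) uniform_limit_theorem[OF _ lim] by (simp add: CX_def)
qed

lemma comm_cstar_alg_CX:
  assumes "compact (UNIV :: 'x::topological_space set)"
  shows "comm_cstar_alg (CX :: ('x \<Rightarrow> complex) set)"
  unfolding comm_cstar_alg_def
proof (intro conjI ballI allI impI)
  show "f \<in> CX \<Longrightarrow> bdd_fun f" for f :: "'x \<Rightarrow> complex"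
    by (fact bdd_fun_CX[OF assms])
  show "bdd_fun f \<and> (\<forall>e>0. \<exists>h\<in>CX. supnorm (\<lambda>x. f x - h x) < e) \<Longrightarrow> f \<in> CX"
    for f :: "'x \<Rightarrow> complex"
    using CX_closed_under_uniform_approximation[OF assms] by blast
qed (auto simp: CX_def intro!: continuous_intros)

lemma continuous_on_act:
  assumes "continuous_group_action act" and "continuous_on UNIV a" and "continuous_on UNIV b"
  shows "continuous_on UNIV (\<lambda>p. act (a p) (b p))"
proof -
  have "continuous_on UNIV (\<lambda>p. (a p, b p))"
    using assms(2,3) by (intro continuous_intros)
  with assms(1) show ?thesis
    using continuous_on_compose2[of UNIV "\<lambda>q. act (fst q) (snd q)" UNIV "\<lambda>p. (a p, b p)"]
    by (simp add: continuous_group_action_def)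
qed

lemma induced_action_CX:
  assumes "continuous_group_action act" and "f \<in> CX"
  shows "induced_action act g f \<in> CX"
proof -
  have "continuous_on UNIV (\<lambda>x. act (- g) x)"
    by (rule continuous_on_act[OF assms(1) continuous_on_const continuous_on_id])
  then show ?thesis
    using assms(2) unfolding CX_def induced_action_def
    by (auto intro: continuous_on_compose2[OF _ _ subset_UNIV])
qed

text \<open>By the tube lemma, the continuity of the action is uniform over the compact space \<open>X\<close>.\<close>

lemma induced_action_supnorm_continuous:
  fixes act :: "'g::{group_add,topological_space} \<Rightarrow> 'x::topological_space \<Rightarrow> 'x"
  assumes "compact (UNIV :: 'x set)" and "continuous_group_action act"
    and "continuous_on UNIV (\<lambda>g::'g. - g)" and "f \<in> CX" and "e > 0"
  shows "\<exists>U. open U \<and> g0 \<in> U \<and>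
    (\<forall>g\<in>U. supnorm (\<lambda>x. induced_action act g f x - induced_action act g0 f x) < e)"
proof -
  define F where "F p = f (act (- fst p) (snd p)) - f (act (- g0) (snd p))" for p :: "'g \<times> 'x"
  have "continuous_on UNIV (\<lambda>p::'g \<times> 'x. - fst p)"
    using continuous_on_compose2[OF assms(3) continuous_on_fst[OF continuous_on_id]] by simp
  then have "continuous_on UNIV (\<lambda>p::'g \<times> 'x. act (- fst p) (snd p))"
    by (rule continuous_on_act[OF assms(2) _ continuous_on_snd[OF continuous_on_id]])
  moreover have "continuous_on UNIV (\<lambda>p::'g \<times> 'x. act (- g0) (snd p))"
    by (rule continuous_on_act[OF assms(2) continuous_on_const continuous_on_snd[OF continuous_on_id]])
  ultimately have "continuous_on UNIV F"
    unfolding F_def using assms(4) continuous_on_compose2[of UNIV f] unfolding CX_def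
    by (intro continuous_on_diff) auto
  then have "open {p. cmod (F p) < e / 2}"
    by (intro open_Collect_less continuous_on_norm continuous_on_const)
  moreover have "{g0} \<times> UNIV \<subseteq> {p. cmod (F p) < e / 2}"
    using assms(5) by (auto simp: F_def)
  ultimately obtain U where U: "g0 \<in> U" "open U" "U \<times> UNIV \<subseteq> {p. cmod (F p) < e / 2}"
    using Elementary_Topology.tube_lemma[OF assms(1)] by metis
  have "supnorm (\<lambda>x. induced_action act g f x - induced_action act g0 f x) < e" if "g \<in> U" for g
  proof -
    have "supnorm (\<lambda>x. induced_action act g f x - induced_action act g0 f x) \<le> e / 2"
    proof (rule supnorm_le)
      fix x :: 'x
      have "(g, x) \<in> U \<times> UNIV" using that by simp
      with U(3) have "cmod (F (g, x)) < e / 2" by blast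
      then show "cmod (induced_action act g f x - induced_action act g0 f x) \<le> e / 2"
        by (simp add: F_def induced_action_def)
    qed
    then show ?thesis using assms(5) by linarith
  qed
  then show ?thesis using U by blast
qed

lemma cont_action_on_induced_action:
  fixes act :: "'g::{group_add,topological_space} \<Rightarrow> 'x::topological_space \<Rightarrow> 'x"
  assumes "compact (UNIV :: 'x set)" and "continuous_group_action act"
    and "continuous_on UNIV (\<lambda>g::'g. - g)"
  shows "cont_action_on (induced_action act) CX"
  unfolding cont_action_on_def
proof (intro conjI allI ballI impI)
  show "induced_action act (g + h) f = induced_action act g (induced_action act h f)" for g h f
    using assms(2) unfolding induced_action_def continuous_group_action_def by (metis minus_add)
  show "induced_action act 0 f = f" for f
    using assms(2) by (simp add: induced_action_def continuous_group_action_def)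
  show "f \<in> CX \<Longrightarrow> induced_action act g f \<in> CX" for g f
    by (fact induced_action_CX[OF assms(2)])
  show "f \<in> CX \<Longrightarrow> e > 0 \<Longrightarrow> \<exists>U. open U \<and> g0 \<in> U \<and>
      (\<forall>g\<in>U. supnorm (\<lambda>x. induced_action act g f x - induced_action act g0 f x) < e)" for f g0 e
    by (fact induced_action_supnorm_continuous[OF assms])
qed (simp_all add: induced_action_def)

section \<open>Characters and bump functions on a compact group\<close>

definition character :: "(('g::topological_space \<Rightarrow> complex) \<Rightarrow> complex) \<Rightarrow> bool" where
  "character ch \<longleftrightarrow> ch (\<lambda>_. 1) = 1 \<and>
     (\<forall>f\<in>CG. \<forall>h\<in>CG. ch (\<lambda>y. f y + h y) = ch f + ch h \<and> ch (\<lambda>y. f y * h y) = ch f * ch h) \<and>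
     (\<forall>c. \<forall>f\<in>CG. ch (\<lambda>y. c * f y) = c * ch f)"

lemma constant_one_CG: "(\<lambda>_. 1) \<in> CG"
  by (simp add: CG_def)

lemma
  assumes "character ch" and "f \<in> CG" and "h \<in> CG"
  shows character_add: "ch (\<lambda>y. f y + h y) = ch f + ch h"
    and character_mult: "ch (\<lambda>y. f y * h y) = ch f * ch h"
  using assms unfolding character_def by blast+

lemma character_const:
  assumes "character ch"
  shows "ch (\<lambda>_. c) = c"
proof -
  have "\<forall>c. \<forall>f\<in>CG. ch (\<lambda>y. c * f y) = c * ch f" and "ch (\<lambda>_. 1) = 1"
    using assms unfolding character_def by blast+
  then show ?thesis
    using constant_one_CG by force
qed

lemma character_sum:
  assumes "character ch" and "finite S" and "\<And>t. t \<in> S \<Longrightarrow> k t \<in> CG"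
  shows "ch (\<lambda>y. \<Sum>t\<in>S. k t y) = (\<Sum>t\<in>S. ch (k t))"
  using assms(2,3)
proof (induction S rule: finite_induct)
  case empty
  show ?case using character_const[OF assms(1)] by simp
next
  case (insert t S)
  have "(\<lambda>y. \<Sum>t\<in>S. k t y) \<in> CG"
    using insert.prems by (auto simp: CG_def intro!: continuous_on_sum)
  then show ?case
    using character_add[OF assms(1) insert.prems[of t]] insert by simp
qed

lemma character_nonzero:
  fixes f :: "'g::topological_space \<Rightarrow> complex"
  assumes "character ch" and "f \<in> CG" and "\<And>y. f y \<noteq> 0"
  shows "ch f \<noteq> 0"
proof -
  have "(\<lambda>y. 1 / f y) \<in> CG"
    using assms(2,3) by (auto simp: CG_def intro!: continuous_intros)
  then have "ch (\<lambda>y. f y * (1 / f y)) = ch f * ch (\<lambda>y. 1 / f y)"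
    by (rule character_mult[OF assms(1,2)])
  moreover have "(\<lambda>y. f y * (1 / f y)) = (\<lambda>_. 1)"
    using assms(3) by simp
  ultimately show ?thesis
    using assms(1) unfolding character_def by auto
qed

text \<open>
  Otherwise every \<open>t\<close> has some \<open>k\<^sub>t \<in> ker ch\<close> with \<open>k\<^sub>t(t) \<noteq> 0\<close>; by compactness finitely many
  of them have no common zero, and then \<open>\<Sum> k\<^sub>t k\<^sub>t\<^sup>*\<close> is an invertible element of \<open>ker ch\<close>.
\<close>

lemma character_is_evaluation:
  assumes "compact (UNIV :: 'g::topological_space set)" and "character ch"
  shows "\<exists>t. \<forall>f\<in>CG. ch f = f (t :: 'g)"
proof (rule ccontr)
  assume "\<nexists>t. \<forall>f\<in>CG. ch f = f t"
  then obtain F where F: "\<And>t. F t \<in> CG" "\<And>t. ch (F t) \<noteq> F t t"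
    by metis
  define k where "k t = (\<lambda>y. F t y + - ch (F t))" for t
  have k_CG: "k t \<in> CG" for t
    using F(1) by (auto simp: k_def CG_def intro!: continuous_intros)
  have k_kernel: "ch (k t) = 0" for t
  proof -
    have "ch (k t) = ch (F t) + ch (\<lambda>_. - ch (F t))"
      unfolding k_def by (rule character_add[OF assms(2) F(1)]) (simp add: CG_def)
    then show ?thesis
      by (simp add: character_const[OF assms(2)])
  qed
  have "\<And>t. open {y. k t y \<noteq> 0}"
    using k_CG by (auto simp: CG_def intro!: open_Collect_neq)
  moreover have "t \<in> {y. k t y \<noteq> 0}" for t
    using F(2)[of t] by (simp add: k_def)
  then have "UNIV \<subseteq> (\<Union>t. {y. k t y \<noteq> 0})"
    by blast
  ultimately obtain T where T: "finite T" "UNIV \<subseteq> (\<Union>t\<in>T. {y. k t y \<noteq> 0})"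
    using compactE_image[OF assms(1), of UNIV "\<lambda>t. {y. k t y \<noteq> 0}"] by metis
  define H where "H = (\<lambda>y. \<Sum>t\<in>T. k t y * cnj (k t y))"
  have kk_CG: "(\<lambda>y. k t y * cnj (k t y)) \<in> CG" and cnj_k_CG: "(\<lambda>y. cnj (k t y)) \<in> CG" for t
    using k_CG by (auto simp: CG_def intro!: continuous_intros)
  have "H \<in> CG"
    using kk_CG unfolding H_def CG_def by (auto intro!: continuous_on_sum)
  moreover have "ch H = 0"
    unfolding H_def character_sum[OF assms(2) T(1) kk_CG]
    by (simp add: character_mult[OF assms(2) k_CG cnj_k_CG] k_kernel)
  moreover have "H y \<noteq> 0" for y
  proof -
    obtain t where "t \<in> T" "k t y \<noteq> 0"
      using T(2) by auto
    then have "(\<Sum>t\<in>T. (cmod (k t y))\<^sup>2) > 0"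
      using T(1) by (intro sum_pos2) auto
    moreover have "H y = of_real (\<Sum>t\<in>T. (cmod (k t y))\<^sup>2)"
      unfolding H_def of_real_sum complex_norm_square by simp
    ultimately show ?thesis
      by (metis of_real_eq_0_iff less_irrefl)
  qed
  ultimately show False
    using character_nonzero[OF assms(2)] by blast
qed

lemma t2_Hausdorff_space_euclidean: "Hausdorff_space (euclidean :: 'a::t2_space topology)"
  unfolding Hausdorff_space_def by (simp add: disjnt_def separation_t2)

lemma CG_bump:
  assumes "compact (UNIV :: 'g::t2_space set)" and "open V" and "(p :: 'g) \<in> V"
  shows "\<exists>f\<in>CG. f p = 1 \<and> (\<forall>y. y \<notin> V \<longrightarrow> f y = 0)"
proof -
  have "normal_space (euclidean :: 'g topology)"
    using assms(1) t2_Hausdorff_space_euclidean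
    by (intro compact_Hausdorff_or_regular_imp_normal_space) (auto simp: compact_space_def)
  then obtain f where f: "continuous_map euclidean (top_of_set {0..1::real}) f"
      "f ` (- V) \<subseteq> {0}" "f ` {p} \<subseteq> {1}"
    using Urysohn_lemma[of euclidean "- V" "{p}" 0 1] assms(2,3) by (auto simp: disjnt_def)
  then have "continuous_on UNIV f"
    by (metis continuous_map_into_fulltopology continuous_map_iff_continuous2 subtopology_UNIV)
  then have "(\<lambda>y. complex_of_real (f y)) \<in> CG"
    by (auto simp: CG_def intro!: continuous_intros)
  then show ?thesis
    using f(2,3) by (intro bexI[of _ "\<lambda>y. complex_of_real (f y)"]) auto
qed

lemma CG_separates_points:
  assumes "compact (UNIV :: 'g::t2_space set)" and "\<And>f. f \<in> CG \<Longrightarrow> f s = f (t :: 'g)"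
  shows "s = t"
proof (rule ccontr)
  assume "s \<noteq> t"
  then obtain f where "f \<in> CG" "f t = 1" "f s = 0"
    using CG_bump[OF assms(1), of "- {s}" t] by auto
  then show False
    using assms(2)[of f] by simp
qed

lemma Lt_CG:
  assumes "topological_group TYPE('g::{group_add,topological_space})" and "f \<in> CG"
  shows "Lt (g :: 'g) f \<in> CG"
proof -
  have "continuous_on UNIV (\<lambda>h::'g. - g + h)"
    using continuous_on_compose2[of UNIV "\<lambda>p::'g \<times> 'g. fst p + snd p" UNIV "Pair (- g)"] assms(1)
    by (simp add: topological_group_def continuous_intros)
  then show ?thesis
    using assms(2) continuous_on_compose2[of UNIV f] by (auto simp: CG_def Lt_def)
qed

section \<open>Equivariant maps to the group\<close>

definition equivariant_map_to_group ::
  "('g::{group_add,topological_space} \<Rightarrow> 'x::topological_space \<Rightarrow> 'x) \<Rightarrow> ('x \<Rightarrow> 'g) \<Rightarrow> bool" where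
  "equivariant_map_to_group act \<phi> \<longleftrightarrow>
     continuous_on UNIV \<phi> \<and> (\<forall>g x. \<phi> (act g x) = g + \<phi> x)"

definition equivariant_trivialization ::
  "('g::{group_add,topological_space} \<Rightarrow> 'x::topological_space \<Rightarrow> 'x) \<Rightarrow> ('x set \<times> 'g \<Rightarrow> 'x) \<Rightarrow> bool" where
  "equivariant_trivialization act \<sigma> \<longleftrightarrow>
     homeomorphic_map (prod_topology (orbit_space_topology act) euclidean) euclidean \<sigma> \<and>
     (\<forall>g h x. act g (\<sigma> (orbit act x, h)) = \<sigma> (orbit act x, g + h))"

lemma equivariant_map_if_equivariant_hom:
  fixes \<pi> :: "('g::{group_add,t2_space} \<Rightarrow> complex) \<Rightarrow> 'x::topological_space \<Rightarrow> complex"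
    and act :: "'g \<Rightarrow> 'x \<Rightarrow> 'x"
  assumes "compact (UNIV :: 'g set)" and "topological_group TYPE('g)"
    and "\<And>f. f \<in> CG \<Longrightarrow> \<pi> f \<in> CX" and "\<And>x. character (\<lambda>f. \<pi> f x)"
    and "\<And>g f. f \<in> CG \<Longrightarrow> \<pi> (Lt g f) = induced_action act g (\<pi> f)"
  shows "\<exists>\<phi>. equivariant_map_to_group act \<phi>"
proof -
  obtain \<phi> where \<phi>: "\<And>x f. f \<in> CG \<Longrightarrow> \<pi> f x = f (\<phi> x)"
    using character_is_evaluation[OF assms(1,4)] by metis
  have "\<phi> (act (- g) x) = - g + \<phi> x" for g x
  proof (rule CG_separates_points[OF assms(1)])
    fix f :: "'g \<Rightarrow> complex" assume f: "f \<in> CG"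
    have "f (\<phi> (act (- g) x)) = induced_action act g (\<pi> f) x"
      by (simp add: \<phi>[OF f] induced_action_def)
    also have "\<dots> = Lt g f (\<phi> x)"
      using \<phi>[OF Lt_CG[OF assms(2) f]] assms(5)[OF f] by simp
    finally show "f (\<phi> (act (- g) x)) = f (- g + \<phi> x)"
      by (simp add: Lt_def)
  qed
  then have "\<phi> (act g x) = g + \<phi> x" for g x
    by (metis minus_minus)
  moreover have "continuous_on UNIV \<phi>"
    unfolding continuous_on_topological
  proof (intro ballI allI impI)
    fix x0 B assume "open B" "\<phi> x0 \<in> B"
    then obtain f where f: "f \<in> CG" "f (\<phi> x0) = 1" "\<forall>y. y \<notin> B \<longrightarrow> f y = 0"
      using CG_bump[OF assms(1)] by blast
    have "open {x. \<pi> f x \<noteq> 0}"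
      using assms(3)[OF f(1)] by (intro open_Collect_neq) (auto simp: CX_def)
    then show "\<exists>A. open A \<and> x0 \<in> A \<and> (\<forall>x\<in>UNIV. x \<in> A \<longrightarrow> \<phi> x \<in> B)"
      using \<phi>[OF f(1)] f(2,3) by (intro exI[of _ "{x. \<pi> f x \<noteq> 0}"]) auto
  qed
  ultimately show ?thesis
    unfolding equivariant_map_to_group_def by blast
qed

lemma character_if_star_hom:
  assumes "star_hom CG \<Psi>" and "\<Psi> (\<lambda>_. 1) n x = 1"
  shows "character (\<lambda>f. \<Psi> f n x)"
  using assms unfolding star_hom_def character_def by simp

lemma idempotent_near_one_eq_one:
  fixes z :: complex
  assumes "z * z = z" and "cmod (z - 1) < 1"
  shows "z = 1"
proof -
  have "z * (z - 1) = 0"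
    using assms(1) by (simp add: algebra_simps)
  then show ?thesis
    using assms(2) by auto
qed

lemma unital_coordinate_of_lift:
  fixes \<Psi> \<Phi> :: "('g::topological_space \<Rightarrow> complex) \<Rightarrow> nat \<Rightarrow> 'x::topological_space \<Rightarrow> complex"
  assumes "compact (UNIV :: 'x set)" and "star_hom CG \<Psi>"
    and "\<And>n. \<Psi> (\<lambda>_. 1) n \<in> CX" and "\<And>n. \<Phi> (\<lambda>_. 1) n \<in> CX"
    and "asymp_eq (\<Psi> (\<lambda>_. 1)) (\<Phi> (\<lambda>_. 1))" and "asymp_eq (\<Phi> (\<lambda>_. 1)) (\<lambda>n x. 1)"
  shows "\<exists>n. \<Psi> (\<lambda>_. 1) n = (\<lambda>_. 1)"
proof -
  define p q where "p = \<Psi> (\<lambda>_. 1)" and "q = \<Phi> (\<lambda>_. 1)"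
  have "\<forall>\<^sub>F n in sequentially. \<forall>x. cmod (p n x - q n x) < 1 / 2"
    using assms(3-5) unfolding asymp_eq_def p_def q_def
    by (intro null_seq_CX_eventually_small[OF assms(1)]) (auto simp: CX_def intro!: continuous_intros)
  moreover have "\<forall>\<^sub>F n in sequentially. \<forall>x. cmod (q n x - 1) < 1 / 2"
    using assms(4,6) unfolding asymp_eq_def q_def
    by (intro null_seq_CX_eventually_small[OF assms(1)]) (auto simp: CX_def intro!: continuous_intros)
  ultimately have "\<forall>\<^sub>F n in sequentially.
      (\<forall>x. cmod (p n x - q n x) < 1 / 2) \<and> (\<forall>x. cmod (q n x - 1) < 1 / 2)"
    by (rule eventually_conj)
  then obtain n where n: "\<And>x. cmod (p n x - q n x) < 1 / 2" "\<And>x. cmod (q n x - 1) < 1 / 2"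
    unfolding eventually_sequentially by blast
  have "\<forall>f\<in>CG. \<forall>h\<in>CG. \<Psi> (\<lambda>y. f y * h y) = (\<lambda>n x. \<Psi> f n x * \<Psi> h n x)"
    using assms(2) unfolding star_hom_def by blast
  from bspec[OF bspec[OF this constant_one_CG] constant_one_CG, unfolded mult_1]
  have idempotent: "p = (\<lambda>n x. p n x * p n x)"
    unfolding p_def .
  have "p n x = 1" for x
  proof (rule idempotent_near_one_eq_one)
    show "p n x * p n x = p n x"
      using fun_cong[OF fun_cong[OF idempotent, of n], of x] by (rule sym)
    have "cmod (p n x - 1) \<le> cmod (p n x - q n x) + cmod (q n x - 1)"
      using norm_triangle_ineq[of "p n x - q n x" "q n x - 1"] by simp
    then show "cmod (p n x - 1) < 1"
      using n[of x] by linarith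
  qed
  then show ?thesis
    unfolding p_def by blast
qed

lemma equivariant_map_if_rokhlin:
  fixes act :: "'g::{group_add,t2_space} \<Rightarrow> 'x::topological_space \<Rightarrow> 'x"
  assumes "compact (UNIV :: 'x set)" and "compact (UNIV :: 'g set)"
    and "topological_group TYPE('g)" and "continuous_group_action act"
    and "wesp_comm_Lt TYPE('g) TYPE('x)" and "rokhlin act"
  shows "\<exists>\<phi>. equivariant_map_to_group act \<phi>"
proof -
  have neg: "continuous_on UNIV (\<lambda>g::'g. - g)"
    using assms(3) by (simp add: topological_group_def)
  obtain \<Phi> :: "('g \<Rightarrow> complex) \<Rightarrow> nat \<Rightarrow> 'x \<Rightarrow> complex" where
    \<Phi>: "\<forall>f\<in>CG. \<Phi> f \<in> linf CX" "hom_mod CG \<Phi>" "asymp_eq (\<Phi> (\<lambda>_. 1)) (\<lambda>n x. 1)"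
      "\<forall>g. \<forall>f\<in>CG. asymp_eq (\<Phi> (Lt g f)) (\<lambda>n. induced_action act g (\<Phi> f n))"
    using assms(6) unfolding rokhlin_def linf_alpha_def by blast
  then obtain \<Psi> :: "('g \<Rightarrow> complex) \<Rightarrow> nat \<Rightarrow> 'x \<Rightarrow> complex" where
    \<Psi>: "\<forall>f\<in>CG. \<Psi> f \<in> linf CX" "star_hom CG \<Psi>"
      "\<forall>g. \<forall>f\<in>CG. \<Psi> (Lt g f) = (\<lambda>n. induced_action act g (\<Psi> f n))"
      "\<forall>f\<in>CG. asymp_eq (\<Psi> f) (\<Phi> f)"
    using assms(5) comm_cstar_alg_CX[OF assms(1)] cont_action_on_induced_action[OF assms(1,4) neg]
    unfolding wesp_comm_Lt_def by blast
  obtain n where n: "\<Psi> (\<lambda>_. 1) n = (\<lambda>_. 1)"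
    using unital_coordinate_of_lift[OF assms(1) \<Psi>(2), of \<Phi>] \<Phi>(1,3) \<Psi>(1,4)
      constant_one_CG[where 'a = 'g]
    by (auto simp: linf_def)
  show ?thesis
    using \<Psi>(1,3) n character_if_star_hom[OF \<Psi>(2)]
    by (intro equivariant_map_if_equivariant_hom[OF assms(2,3), of "\<lambda>f. \<Psi> f n"])
      (auto simp: linf_def)
qed

lemma rokhlin_if_equivariant_map:
  fixes act :: "'g::{group_add,topological_space} \<Rightarrow> 'x::topological_space \<Rightarrow> 'x"
  assumes "compact (UNIV :: 'x set)" and "continuous_group_action act"
    and "continuous_on UNIV (\<lambda>g::'g. - g)" and "equivariant_map_to_group act \<psi>"
  shows "rokhlin act"
proof -
  define \<Phi> where "\<Phi> f = (\<lambda>(n::nat) x. f (\<psi> x))" for f :: "'g \<Rightarrow> complex"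
  have "\<Phi> f \<in> linf_alpha act CX" if "f \<in> CG" for f
  proof -
    have fc: "(\<lambda>x. f (\<psi> x)) \<in> CX"
      using that assms(4) continuous_on_compose2[of UNIV f UNIV \<psi>]
      by (auto simp: CG_def CX_def equivariant_map_to_group_def)
    show ?thesis
      using induced_action_supnorm_continuous[OF assms(1-3) fc] fc
      by (simp add: linf_alpha_def linf_def seqnorm_def \<Phi>_def)
  qed
  moreover have "\<Phi> (Lt g f) = (\<lambda>n. induced_action act g (\<Phi> f n))" for g f
    using assms(4)
    by (simp add: \<Phi>_def Lt_def induced_action_def equivariant_map_to_group_def)
  ultimately show ?thesis
    unfolding rokhlin_def hom_mod_def null_seq_def
    by (intro exI[of _ \<Phi>]) (simp add: \<Phi>_def asymp_eq_refl mult.commute supnorm_def)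
qed

section \<open>The orbit space\<close>

context
  fixes act :: "'g::{group_add,topological_space} \<Rightarrow> 'x::topological_space \<Rightarrow> 'x"
  assumes action: "continuous_group_action act"
begin

lemma act_zero: "act 0 x = x" and act_add: "act (g + h) x = act g (act h x)"
  using action by (auto simp: continuous_group_action_def)

lemma orbit_self: "x \<in> orbit act x"
  unfolding orbit_def by (metis act_zero rangeI)

lemma orbit_act: "orbit act (act g x) = orbit act x"
proof
  show "orbit act (act g x) \<subseteq> orbit act x"
    unfolding orbit_def by (auto simp flip: act_add)
  show "orbit act x \<subseteq> orbit act (act g x)"
  proof
    fix y assume "y \<in> orbit act x"
    then obtain h where "y = act h x"
      unfolding orbit_def by auto
    then have "y = act (h + - g) (act g x)"
      by (simp flip: act_add add: add.assoc)
    then show "y \<in> orbit act (act g x)"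
      unfolding orbit_def by auto
  qed
qed

lemma orbits_eq_orbit:
  assumes "Ob \<in> orbits act" and "x \<in> Ob"
  shows "Ob = orbit act x"
proof -
  obtain z g where "Ob = orbit act z" and "x = act g z"
    using assms unfolding orbits_def orbit_def by auto
  then show ?thesis
    by (simp add: orbit_act)
qed

lemma openin_orbit_space_topology:
  "openin (orbit_space_topology act) U \<longleftrightarrow> U \<subseteq> orbits act \<and> open (\<Union>U)"
proof -
  have "istopology (\<lambda>U. U \<subseteq> orbits act \<and> open (\<Union>U))"
    unfolding istopology_def
  proof (rule conjI; intro allI impI)
    fix S T assume S: "S \<subseteq> orbits act \<and> open (\<Union>S)" and T: "T \<subseteq> orbits act \<and> open (\<Union>T)"
    have "\<Union>(S \<inter> T) = \<Union>S \<inter> \<Union>T"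
      using S T orbits_eq_orbit by blast
    then show "S \<inter> T \<subseteq> orbits act \<and> open (\<Union>(S \<inter> T))"
      using S T by auto
  next
    fix K assume K: "\<forall>U\<in>K. U \<subseteq> orbits act \<and> open (\<Union>U)"
    have "\<Union>(\<Union>K) = (\<Union>U\<in>K. \<Union>U)"
      by auto
    then show "\<Union>K \<subseteq> orbits act \<and> open (\<Union>(\<Union>K))"
      using K by (auto intro!: open_UN)
  qed
  then show ?thesis
    unfolding orbit_space_topology_def by simp
qed

lemma topspace_orbit_space_topology: "topspace (orbit_space_topology act) = orbits act"
proof -
  have "\<Union>(orbits act) = UNIV"
    using orbit_self unfolding orbits_def by blast
  then have "openin (orbit_space_topology act) (orbits act)"
    by (simp add: openin_orbit_space_topology)
  then show ?thesis
    using openin_subset[of "orbit_space_topology act"] openin_orbit_space_topology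
    by (metis openin_topspace subset_antisym)
qed

lemma continuous_map_orbit: "continuous_map euclidean (orbit_space_topology act) (orbit act)"
  unfolding continuous_map openin_orbit_space_topology topspace_orbit_space_topology
proof (intro conjI allI impI)
  fix U assume U: "U \<subseteq> orbits act \<and> open (\<Union>U)"
  then have "{x \<in> topspace euclidean. orbit act x \<in> U} = \<Union>U"
    using orbits_eq_orbit orbit_self by auto
  then show "openin euclidean {x \<in> topspace euclidean. orbit act x \<in> U}"
    using U by simp
qed (auto simp: orbits_def)

lemma invariant_on_orbit:
  assumes "\<And>g x. \<rho> (act g x) = \<rho> x"
  shows "\<rho> (SOME y. y \<in> orbit act x) = \<rho> x"
proof -
  obtain g where "(SOME y. y \<in> orbit act x) = act g x"
    using someI[of "\<lambda>y. y \<in> orbit act x", OF orbit_self] unfolding orbit_def by auto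
  then show ?thesis
    by (simp add: assms)
qed

lemma continuous_map_orbit_space_invariant:
  fixes \<rho> :: "'x \<Rightarrow> 'b::topological_space"
  assumes "continuous_on UNIV \<rho>" and "\<And>g x. \<rho> (act g x) = \<rho> x"
  shows "continuous_map (orbit_space_topology act) euclidean (\<lambda>Ob. \<rho> (SOME y. y \<in> Ob))"
  unfolding continuous_map openin_orbit_space_topology topspace_orbit_space_topology
proof (intro conjI allI impI)
  fix V :: "'b set" assume "openin euclidean V"
  let ?U = "{Ob \<in> orbits act. \<rho> (SOME y. y \<in> Ob) \<in> V}"
  show "?U \<subseteq> orbits act"
    by blast
  have "\<Union>?U = \<rho> -` V"
  proof
    show "\<Union>?U \<subseteq> \<rho> -` V"
    proof
      fix x assume "x \<in> \<Union>?U"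
      then obtain Ob where Ob: "Ob \<in> orbits act" "\<rho> (SOME y. y \<in> Ob) \<in> V" "x \<in> Ob"
        by blast
      then have "Ob = orbit act x"
        by (intro orbits_eq_orbit)
      then show "x \<in> \<rho> -` V"
        using Ob(2) by (simp add: invariant_on_orbit[OF assms(2)])
    qed
    show "\<rho> -` V \<subseteq> \<Union>?U"
    proof
      fix x assume "x \<in> \<rho> -` V"
      then have "orbit act x \<in> ?U"
        by (simp add: orbits_def invariant_on_orbit[OF assms(2)])
      then show "x \<in> \<Union>?U"
        using orbit_self by blast
    qed
  qed
  then show "open (\<Union>?U)"
    using assms(1) \<open>openin euclidean V\<close> by (simp add: continuous_on_open_vimage)
qed auto

text \<open>\<open>\<rho> x = \<phi>(x)\<^sup>-\<^sup>1\<cdot>x\<close> is constant on orbits and picks a base point in each of them.\<close>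

lemma equivariant_trivialization_if_equivariant_map:
  assumes "continuous_on UNIV (\<lambda>g::'g. - g)" and "equivariant_map_to_group act \<phi>"
  shows "\<exists>\<sigma>. equivariant_trivialization act \<sigma>"
proof -
  have \<phi>: "continuous_on UNIV \<phi>" "\<And>g x. \<phi> (act g x) = g + \<phi> x"
    using assms(2) by (auto simp: equivariant_map_to_group_def)
  define \<rho> where "\<rho> x = act (- \<phi> x) x" for x
  have \<rho>_invariant: "\<rho> (act g x) = \<rho> x" for g x
    unfolding \<rho>_def \<phi>(2) by (simp flip: act_add add: minus_add add.assoc)
  have "continuous_on UNIV \<rho>"
    unfolding \<rho>_def using continuous_on_compose2[OF assms(1) \<phi>(1)]
    by (intro continuous_on_act[OF action]) (auto intro: continuous_intros)
  define \<sigma> where "\<sigma> p = act (snd p) (\<rho> (SOME y. y \<in> fst p))" for p :: "'x set \<times> 'g"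
  define \<tau> where "\<tau> x = (orbit act x, \<phi> x)" for x
  let ?Q = "orbit_space_topology act"
  have "continuous_map (prod_topology ?Q euclidean) euclidean \<sigma>"
  proof -
    have pair: "continuous_map (prod_topology ?Q euclidean) (prod_topology euclidean euclidean)
        (\<lambda>p. (snd p, \<rho> (SOME y. y \<in> fst p)))"
      using continuous_map_orbit_space_invariant[OF \<open>continuous_on UNIV \<rho>\<close> \<rho>_invariant]
      by (intro continuous_map_pairedI continuous_map_snd
          continuous_map_compose[OF continuous_map_fst, unfolded o_def])
    have act: "continuous_map (prod_topology euclidean euclidean) euclidean
        (\<lambda>p::'g \<times> 'x. act (fst p) (snd p))"
      using action by (simp add: continuous_group_action_def)
    have "\<sigma> = (\<lambda>p. act (fst p) (snd p)) \<circ> (\<lambda>p. (snd p, \<rho> (SOME y. y \<in> fst p)))"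
      by (simp add: fun_eq_iff \<sigma>_def)
    then show ?thesis
      using continuous_map_compose[OF pair act] by simp
  qed
  moreover have "continuous_map euclidean (prod_topology ?Q euclidean) \<tau>"
    unfolding \<tau>_def using continuous_map_orbit \<phi>(1) by (intro continuous_map_pairedI) auto
  moreover have "\<sigma> (\<tau> x) = x" for x
  proof -
    have "\<sigma> (\<tau> x) = act (\<phi> x) (\<rho> x)"
      by (simp add: \<sigma>_def \<tau>_def invariant_on_orbit[OF \<rho>_invariant])
    also have "\<dots> = x"
      by (simp add: \<rho>_def act_zero flip: act_add)
    finally show ?thesis .
  qed
  moreover have "\<tau> (\<sigma> p) = p" if "p \<in> topspace (prod_topology ?Q euclidean)" for p
  proof -
    have "fst p \<in> range (orbit act)"
      using that by (auto simp: topspace_orbit_space_topology orbits_def mem_Times_iff)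
    then obtain y h where p: "p = (orbit act y, h)"
      by (cases p) auto
    then have "\<sigma> p = act h (\<rho> y)"
      by (simp add: \<sigma>_def invariant_on_orbit[OF \<rho>_invariant])
    then have "\<sigma> p = act (h - \<phi> y) y"
      by (simp add: \<rho>_def flip: act_add)
    then show ?thesis
      by (simp add: \<tau>_def p orbit_act \<phi>(2) add.assoc)
  qed
  ultimately have "homeomorphic_map (prod_topology ?Q euclidean) euclidean \<sigma>"
    unfolding homeomorphic_map_maps homeomorphic_maps_def by auto
  moreover have "act g (\<sigma> (orbit act x, h)) = \<sigma> (orbit act x, g + h)" for g h x
    by (simp add: \<sigma>_def act_add)
  ultimately show ?thesis
    unfolding equivariant_trivialization_def by blast
qed

lemma equivariant_map_if_equivariant_trivialization:
  assumes "equivariant_trivialization act \<sigma>"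
  shows "\<exists>\<psi>. equivariant_map_to_group act \<psi>"
proof -
  let ?Q = "orbit_space_topology act"
  obtain \<tau> where "homeomorphic_maps (prod_topology ?Q euclidean) euclidean \<sigma> \<tau>"
    using assms homeomorphic_map_maps unfolding equivariant_trivialization_def by blast
  then have \<tau>: "continuous_map euclidean (prod_topology ?Q euclidean) \<tau>"
    and \<tau>\<sigma>: "\<And>p. p \<in> topspace (prod_topology ?Q euclidean) \<Longrightarrow> \<tau> (\<sigma> p) = p"
    and \<sigma>\<tau>: "\<And>x. \<sigma> (\<tau> x) = x"
    unfolding homeomorphic_maps_def by auto
  have "snd (\<tau> (act g x)) = g + snd (\<tau> x)" for g x
  proof -
    have "\<tau> x \<in> topspace (prod_topology ?Q euclidean)"
      using \<tau> unfolding continuous_map_def by auto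
    then have "fst (\<tau> x) \<in> range (orbit act)"
      by (auto simp: topspace_orbit_space_topology orbits_def mem_Times_iff)
    then obtain y h where yh: "\<tau> x = (orbit act y, h)"
      by (cases "\<tau> x") auto
    then have "act g x = \<sigma> (orbit act y, g + h)"
      using assms \<sigma>\<tau>[of x] unfolding equivariant_trivialization_def by metis
    then have "\<tau> (act g x) = (orbit act y, g + h)"
      using \<tau>\<sigma> by (simp add: topspace_orbit_space_topology orbits_def)
    then show ?thesis using yh by simp
  qed
  moreover have "continuous_on UNIV (\<lambda>x. snd (\<tau> x))"
    using continuous_map_compose[OF \<tau> continuous_map_snd] by (simp add: o_def)
  ultimately show ?thesis
    unfolding equivariant_map_to_group_def by blast
qed

end

theorem theorem4p12:
  fixes act :: "'g::{group_add,t2_space,second_countable_topology} \<Rightarrow> 'x::t2_space \<Rightarrow> 'x"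
  assumes "compact (UNIV :: 'x set)"
    and "compact (UNIV :: 'g set)"
    and "topological_group TYPE('g)"
    and "continuous_group_action act"
    and "wesp_comm_Lt TYPE('g) TYPE('x)"
  shows "rokhlin act \<longleftrightarrow>
    (\<exists>\<sigma> :: 'x set \<times> 'g \<Rightarrow> 'x.
       homeomorphic_map (prod_topology (orbit_space_topology act) euclidean) euclidean \<sigma> \<and>
       (\<forall>g h x. act g (\<sigma> (orbit act x, h)) = \<sigma> (orbit act x, g + h)))"
proof -
  have neg: "continuous_on UNIV (\<lambda>g::'g. - g)"
    using assms(3) by (simp add: topological_group_def)
  have "rokhlin act \<longleftrightarrow> (\<exists>\<phi>. equivariant_map_to_group act \<phi>)"
    using equivariant_map_if_rokhlin[OF assms] rokhlin_if_equivariant_map[OF assms(1,4) neg]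
    by blast
  also have "\<dots> \<longleftrightarrow> (\<exists>\<sigma>. equivariant_trivialization act \<sigma>)"
    using equivariant_trivialization_if_equivariant_map[OF assms(4) neg]
      equivariant_map_if_equivariant_trivialization[OF assms(4)] by blast
  finally show ?thesis
    unfolding equivariant_trivialization_def .
qed

end
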